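(* Let $\Gamma_2(t)=\mathbb{A}(t)+\varepsilon^*\mathbb{A}^*(t)$ be a differentiable curve in $\mathbb{S}^2_{\mathbb{D}_2}$, $t\in[0,T]$, with $\mathbb{A}=\mathbf a_0+\varepsilon\mathbf a_1$, $\mathbb{A}^*=\mathbf a_2+\varepsilon\mathbf a_3$, and assume $\mathbf a_0'(t)\neq0$ for all $t$. Let $\Phi_2(t,\mathbb{U})=\mathbb{A}\times\mathbb{A}^*+\mathbb{U}\mathbb{A}$ be its corresponding ruled surface in $\mathbb{D}$. Define the arc-length functions $$s_{\Gamma_2}(t)=\int_0^t|\Gamma_2'(\sigma)|\,d\sigma,\qquad s_{\mathbb{A}}(t)=\int_0^t|\mathbb{A}'(\sigma)|\,d\sigma,\qquad s_{\mathbf a_0}(t)=\int_0^t|\mathbf a_0'(\sigma)|\,d\sigma.$$ Then $\Phi_2$ is developable if and only if (i) $s_{\Gamma_2}(t)=s_{\mathbb{A}}(t)$ for all $t$, or (ii) $s_{\Gamma_2}(t)=s_{\mathbf a_0}(t)$ for all $t$ and the real ruled surface $\Phi(t,u)=\mathbf a_0(t)\times\mathbf a_1(t)+u\,\mathbf a_0(t)$ in $\mathbb{R}^3$ is developable.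
   Context: Dual numbers $D=\{a+\varepsilon a^*\}$, $\varepsilon^2=0$, $\varepsilon\ne0$. Dual vectors $\mathbb{D}=\{\mathbf a+\varepsilon\mathbf a^*:\mathbf a,\mathbf a^*\in\mathbb{R}^3\}$ with $D$-valued inner product $\langle\mathbf a+\varepsilon\mathbf a^*,\mathbf b+\varepsilon\mathbf b^*\rangle=\mathbf a\cdot\mathbf b+\varepsilon(\mathbf a^*\cdot\mathbf b+\mathbf a\cdot\mathbf b^* )$, cross product $(\mathbf a+\varepsilon\mathbf a^* )\times(\mathbf b+\varepsilon\mathbf b^* )=\mathbf a\times\mathbf b+\varepsilon(\mathbf a\times\mathbf b^*+\mathbf a^*\times\mathbf b)$, dual determinant $\det(X,Y,Z)=\langle X,Y\times Z\rangle$, and norm (for $\mathbf a\neq0$) $|\mathbf a+\varepsilon\mathbf a^*|=|\mathbf a|+\varepsilon\frac{\mathbf a\cdot\mathbf a^*}{|\mathbf a|}$. Hyper-dual vectors $\mathbb{D}_2=\{\mathbb{A}+\varepsilon^*\mathbb{A}^*\}$ with $\varepsilon^{*2}=0$, $\varepsilon\varepsilon^*=\varepsilon^*\varepsilon\ne0$, $(\varepsilon\varepsilon^* )^2=0$; inner product $\langle\mathbb{A}+\varepsilon^*\mathbb{A}^*,\mathbb{B}+\varepsilon^*\mathbb{B}^*\rangle_2=\langle\mathbb{A},\mathbb{B}\rangle+\varepsilon^*(\langle\mathbb{A},\mathbb{B}^*\rangle+\langle\mathbb{A}^*,\mathbb{B}\rangle)$; norm (when the real part of $\mathbb{A}$ is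 nonzero) $|\mathbb{A}+\varepsilon^*\mathbb{A}^*|=|\mathbb{A}|+\varepsilon^*\frac{\langle\mathbb{A},\mathbb{A}^*\rangle}{|\mathbb{A}|}$ (division by an invertible dual number). Unit hyper-dual sphere $\mathbb{S}^2_{\mathbb{D}_2}=\{\mathbb{A}+\varepsilon^*\mathbb{A}^*:\langle\mathbb{A},\mathbb{A}\rangle=1,\langle\mathbb{A},\mathbb{A}^*\rangle=0\}$. Derivatives and integrals of dual/hyper-dual valued functions are taken componentwise. A ruled surface $\mathbb{B}(t)+\mathbb{U}\mathbb{B}^*(t)$ in $\mathbb{D}$ ($\mathbb{U}\in D$) is developable if $\det(\mathbb{B}',\mathbb{B}^*,\mathbb{B}^{*\prime})=0$ for all $t$; a real ruled surface $\beta(t)+u\alpha(t)$ in $\mathbb{R}^3$ is developable if $\det(\beta'(t),\alpha(t),\alpha'(t))=0$ for all $t$. *)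

theory Defs
  imports "HOL-Analysis.Analysis"
begin

text \<open>Dual numbers a + eps a* as pairs (a, a*); dual vectors a + eps a* as pairs of
  vectors in R^3; hyper-dual numbers/vectors X + eps* X* as pairs of dual numbers/vectors.\<close>

type_synonym dual = "real \<times> real"
type_synonym dvec = "(real^3) \<times> (real^3)"
type_synonym hdual = "dual \<times> dual"
type_synonym hdvec = "dvec \<times> dvec"

definition dmult :: "dual \<Rightarrow> dual \<Rightarrow> dual" where
  "dmult x y = (fst x * fst y, fst x * snd y + snd x * fst y)"

text \<open>division by an invertible dual number (real part nonzero)\<close>
definition ddiv :: "dual \<Rightarrow> dual \<Rightarrow> dual" where
  "ddiv x y = (fst x / fst y, (snd x * fst y - fst x * snd y) / (fst y)^2)"

definition dinner :: "dvec \<Rightarrow> dvec \<Rightarrow> dual" where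
  "dinner A B = (fst A \<bullet> fst B, snd A \<bullet> fst B + fst A \<bullet> snd B)"

definition dcross :: "dvec \<Rightarrow> dvec \<Rightarrow> dvec" where
  "dcross A B = (cross3 (fst A) (fst B), cross3 (fst A) (snd B) + cross3 (snd A) (fst B))"

definition ddet :: "dvec \<Rightarrow> dvec \<Rightarrow> dvec \<Rightarrow> dual" where
  "ddet X Y Z = dinner X (dcross Y Z)"

text \<open>dual norm (meaningful when the real part is nonzero)\<close>
definition dnorm :: "dvec \<Rightarrow> dual" where
  "dnorm A = (norm (fst A), (fst A \<bullet> snd A) / norm (fst A))"

definition hinner :: "hdvec \<Rightarrow> hdvec \<Rightarrow> hdual" where
  "hinner X Y = (dinner (fst X) (fst Y),
                 (\<lambda>(p,q). (fst p + fst q, snd p + snd q))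
                   (dinner (fst X) (snd Y), dinner (snd X) (fst Y)))"

text \<open>hyper-dual norm (meaningful when the real part of the dual part is nonzero)\<close>
definition hnorm :: "hdvec \<Rightarrow> hdual" where
  "hnorm X = (dnorm (fst X), ddiv (dinner (fst X) (snd X)) (dnorm (fst X)))"

definition hsphere :: "hdvec set" where
  "hsphere = {X. dinner (fst X) (fst X) = (1, 0) \<and> dinner (fst X) (snd X) = (0, 0)}"

definition vd :: "real set \<Rightarrow> (real \<Rightarrow> real^3) \<Rightarrow> real \<Rightarrow> real^3" where
  "vd S f t = vector_derivative f (at t within S)"

definition dvderiv :: "real set \<Rightarrow> (real \<Rightarrow> dvec) \<Rightarrow> real \<Rightarrow> dvec" where
  "dvderiv S B t = (vd S (\<lambda>s. fst (B s)) t, vd S (\<lambda>s. snd (B s)) t)"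

definition hvderiv :: "real set \<Rightarrow> (real \<Rightarrow> hdvec) \<Rightarrow> real \<Rightarrow> hdvec" where
  "hvderiv S G t = (dvderiv S (\<lambda>s. fst (G s)) t, dvderiv S (\<lambda>s. snd (G s)) t)"

definition dint :: "real \<Rightarrow> real \<Rightarrow> (real \<Rightarrow> dual) \<Rightarrow> dual" where
  "dint a b h = (integral {a..b} (\<lambda>s. fst (h s)), integral {a..b} (\<lambda>s. snd (h s)))"

definition hint :: "real \<Rightarrow> real \<Rightarrow> (real \<Rightarrow> hdual) \<Rightarrow> hdual" where
  "hint a b h = (dint a b (\<lambda>s. fst (h s)), dint a b (\<lambda>s. snd (h s)))"

definition hcurve :: "(real \<Rightarrow> real^3) \<Rightarrow> (real \<Rightarrow> real^3) \<Rightarrow> (real \<Rightarrow> real^3) \<Rightarrow> (real \<Rightarrow> real^3)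
    \<Rightarrow> real \<Rightarrow> hdvec" where
  "hcurve a0 a1 a2 a3 t = ((a0 t, a1 t), (a2 t, a3 t))"

text \<open>arc-length functions on the parameter domain [0,T], all as hyper-dual numbers\<close>
definition s_G2 :: "real \<Rightarrow> (real \<Rightarrow> hdvec) \<Rightarrow> real \<Rightarrow> hdual" where
  "s_G2 T G t = hint 0 t (\<lambda>\<sigma>. hnorm (hvderiv {0..T} G \<sigma>))"

definition s_A :: "real \<Rightarrow> (real \<Rightarrow> dvec) \<Rightarrow> real \<Rightarrow> hdual" where
  "s_A T A t = (dint 0 t (\<lambda>\<sigma>. dnorm (dvderiv {0..T} A \<sigma>)), (0, 0))"

definition s_a0 :: "real \<Rightarrow> (real \<Rightarrow> real^3) \<Rightarrow> real \<Rightarrow> hdual" where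
  "s_a0 T a t = ((integral {0..t} (\<lambda>\<sigma>. norm (vd {0..T} a \<sigma>)), 0), (0, 0))"

text \<open>ruled surface B(t) + U B*(t) in the dual space, developable on S\<close>
definition dual_ruled_developable :: "real set \<Rightarrow> (real \<Rightarrow> dvec) \<Rightarrow> (real \<Rightarrow> dvec) \<Rightarrow> bool" where
  "dual_ruled_developable S B Bs \<longleftrightarrow>
     (\<forall>t\<in>S. ddet (dvderiv S B t) (Bs t) (dvderiv S Bs t) = (0, 0))"

text \<open>real ruled surface beta(t) + u alpha(t), developable on S\<close>
definition real_ruled_developable :: "real set \<Rightarrow> (real \<Rightarrow> real^3) \<Rightarrow> (real \<Rightarrow> real^3) \<Rightarrow> bool" where
  "real_ruled_developable S \<beta> \<alpha> \<longleftrightarrow>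
     (\<forall>t\<in>S. vd S \<beta> t \<bullet> cross3 (\<alpha> t) (vd S \<alpha> t) = 0)"

end

theory Submission
  imports Defs
begin

text \<open>For a curve \<open>A\<close> on the unit dual sphere with \<open>\<langle>A, A*\<rangle> = 0\<close> we have \<open>\<langle>A, A'\<rangle> = 0\<close>,
  so the dual Lagrange identity reduces \<open>det((A \<times> A*)', A, A')\<close> to \<open>\<langle>A', A*'\<rangle>\<close>.
  On the other hand the \<open>\<epsilon>*\<close>-part of \<open>|\<Gamma>\<^sub>2'|\<close> is \<open>\<langle>A', A*'\<rangle> / |A'|\<close>, a continuous function
  because \<open>a\<^sub>0' \<noteq> 0\<close>; it vanishes identically iff all its integrals from \<open>0\<close> do, i.e. iff
  \<open>s\<^sub>\<Gamma>\<^sub>2\<close> has no \<open>\<epsilon>*\<close>-part, which is condition (i).\<close>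

lemma dinner_commute: "dinner A B = dinner B A"
  by (simp add: dinner_def inner_commute)

lemma dinner_add_left: "dinner (A + B) C = dinner A C + dinner B C"
  by (simp add: dinner_def inner_add_left)

lemma dinner_dcross_dcross:
  "dinner (dcross A B) (dcross C D) = dmult (dinner A C) (dinner B D) - dmult (dinner A D) (dinner B C)"
  by (simp add: dinner_def dcross_def dmult_def inner_add_left inner_add_right cross3_simps
      inner_commute algebra_simps)

lemma bilinear_dinner: "bilinear dinner"
  by (auto simp: bilinear_def dinner_def intro!: linearI
      simp: inner_add_left inner_add_right algebra_simps)

lemma bilinear_dcross: "bilinear dcross"
  by (auto simp: bilinear_def dcross_def intro!: linearI
      simp: cross_add_left cross_add_right cross_mult_left cross_mult_right algebra_simps)

lemma dvderiv_eq:
  fixes A :: "real \<Rightarrow> dvec"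
  assumes "a < b" "t \<in> {a..b}" "(A has_vector_derivative D) (at t within {a..b})"
  shows "dvderiv {a..b} A t = D"
proof -
  have "((\<lambda>s. fst (A s)) has_vector_derivative fst D) (at t within {a..b})"
    "((\<lambda>s. snd (A s)) has_vector_derivative snd D) (at t within {a..b})"
    using bounded_linear_fst bounded_linear_snd assms(3) by (auto intro: bounded_linear.has_vector_derivative)
  then have "vd {a..b} (\<lambda>s. fst (A s)) t = fst D" "vd {a..b} (\<lambda>s. snd (A s)) t = snd D"
    using vector_derivative_within_cbox[of a b t] assms(1,2) by (auto simp: vd_def)
  then show ?thesis
    by (simp add: dvderiv_def prod_eq_iff)
qed

lemma has_vector_derivative_dvderiv:
  fixes A :: "real \<Rightarrow> dvec"
  assumes "a < b" "t \<in> {a..b}" "A differentiable (at t within {a..b})"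
  shows "(A has_vector_derivative dvderiv {a..b} A t) (at t within {a..b})"
  using dvderiv_eq[OF assms(1,2)] vector_derivative_works[THEN iffD1, OF assms(3)] by simp

lemma dvderiv_dcross:
  assumes "a < b" "t \<in> {a..b}"
    and "A differentiable (at t within {a..b})" "B differentiable (at t within {a..b})"
  shows "dvderiv {a..b} (\<lambda>s. dcross (A s) (B s)) t
           = dcross (A t) (dvderiv {a..b} B t) + dcross (dvderiv {a..b} A t) (B t)"
  using bilinear_dcross[unfolded bilinear_conv_bounded_bilinear]
  by (intro dvderiv_eq[OF assms(1,2)] bounded_bilinear.has_vector_derivative
      has_vector_derivative_dvderiv assms)

lemma dinner_constant_deriv:
  assumes "a < b" "t \<in> {a..b}"
    and "A differentiable (at t within {a..b})" "B differentiable (at t within {a..b})"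
    and "\<forall>s\<in>{a..b}. dinner (A s) (B s) = c"
  shows "dinner (A t) (dvderiv {a..b} B t) + dinner (dvderiv {a..b} A t) (B t) = 0"
proof -
  have "((\<lambda>s. dinner (A s) (B s)) has_vector_derivative
          dinner (A t) (dvderiv {a..b} B t) + dinner (dvderiv {a..b} A t) (B t)) (at t within {a..b})"
    using bilinear_dinner[unfolded bilinear_conv_bounded_bilinear]
    by (intro bounded_bilinear.has_vector_derivative has_vector_derivative_dvderiv assms)
  moreover have "((\<lambda>s. dinner (A s) (B s)) has_vector_derivative 0) (at t within {a..b})"
    using assms(2,5) by (intro has_vector_derivative_transform[OF _ _ has_vector_derivative_const]) auto
  ultimately show ?thesis
    using vector_derivative_unique_within_closed_interval[of a b t] assms(1,2) by simp
qed

lemma ddet_dcross_deriv_unit: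
  assumes "dinner A A = (1, 0)" "dinner A A' = (0, 0)" "dinner A As = (0, 0)"
  shows "ddet (dcross A As' + dcross A' As) A A' = dinner A' As'"
proof -
  have "ddet (dcross A As' + dcross A' As) A A'
          = dmult (dinner A A) (dinner As' A') - dmult (dinner A A') (dinner As' A)
            + (dmult (dinner A' A) (dinner As A') - dmult (dinner A' A') (dinner As A))"
    by (simp add: ddet_def dinner_add_left dinner_dcross_dcross)
  also have "\<dots> = dinner A' As'"
    using assms
    by (simp add: dinner_commute[of As' A'] dinner_commute[of A' A] dinner_commute[of As A]
        dmult_def zero_prod_def)
  finally show ?thesis .
qed

lemma dual_ruled_developable_cross_iff:
  fixes A As :: "real \<Rightarrow> dvec"
  assumes "a < b"
    and diff: "\<forall>t\<in>{a..b}. A differentiable (at t within {a..b}) \<and> As differentiable (at t within {a..b})"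
    and unit: "\<forall>t\<in>{a..b}. dinner (A t) (A t) = (1, 0) \<and> dinner (A t) (As t) = (0, 0)"
  shows "dual_ruled_developable {a..b} (\<lambda>t. dcross (A t) (As t)) A
           \<longleftrightarrow> (\<forall>t\<in>{a..b}. dinner (dvderiv {a..b} A t) (dvderiv {a..b} As t) = (0, 0))"
proof -
  have "ddet (dvderiv {a..b} (\<lambda>s. dcross (A s) (As s)) t) (A t) (dvderiv {a..b} A t)
          = dinner (dvderiv {a..b} A t) (dvderiv {a..b} As t)" if t: "t \<in> {a..b}" for t
  proof -
    have "dinner (A t) (dvderiv {a..b} A t) + dinner (dvderiv {a..b} A t) (A t) = 0"
      using unit t diff by (intro dinner_constant_deriv[OF \<open>a < b\<close>, where c="(1, 0)"]) auto
    then have "dinner (A t) (dvderiv {a..b} A t) = (0, 0)"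
      by (simp add: dinner_commute[of "dvderiv {a..b} A t"] prod_eq_iff)
    then show ?thesis
      using unit t diff by (simp add: dvderiv_dcross[OF \<open>a < b\<close>] ddet_dcross_deriv_unit)
  qed
  then show ?thesis
    by (simp add: dual_ruled_developable_def)
qed

lemma integrals_vanish_iff:
  fixes f :: "real \<Rightarrow> 'a::banach"
  assumes "a < b" "continuous_on {a..b} f"
  shows "(\<forall>t\<in>{a..b}. integral {a..t} f = 0) \<longleftrightarrow> (\<forall>t\<in>{a..b}. f t = 0)"
proof
  assume int0: "\<forall>t\<in>{a..b}. integral {a..t} f = 0"
  show "\<forall>t\<in>{a..b}. f t = 0"
  proof
    fix t assume t: "t \<in> {a..b}"
    have "((\<lambda>u. integral {a..u} f) has_vector_derivative f t) (at t within {a..b})"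
      using assms t by (intro integral_has_vector_derivative) auto
    moreover have "((\<lambda>u. integral {a..u} f) has_vector_derivative 0) (at t within {a..b})"
      using int0 t by (intro has_vector_derivative_transform[OF _ _ has_vector_derivative_const]) auto
    ultimately show "f t = 0"
      using vector_derivative_unique_within_closed_interval[of a b t] \<open>a < b\<close> t by simp
  qed
next
  assume "\<forall>t\<in>{a..b}. f t = 0"
  then have "integral {a..t} f = integral {a..t} (\<lambda>_. 0)" if "t \<in> {a..b}" for t
    using that by (intro integral_cong) auto
  then show "\<forall>t\<in>{a..b}. integral {a..t} f = 0"
    by simp
qed

lemma dint_vanish_iff:
  fixes h :: "real \<Rightarrow> dual"
  assumes "a < b" "continuous_on {a..b} h"
  shows "(\<forall>t\<in>{a..b}. dint a t h = (0, 0)) \<longleftrightarrow> (\<forall>t\<in>{a..b}. h t = (0, 0))"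
proof -
  have "continuous_on {a..b} (\<lambda>s. fst (h s))" "continuous_on {a..b} (\<lambda>s. snd (h s))"
    using assms(2) by (auto intro: continuous_on_fst continuous_on_snd)
  then show ?thesis
    using integrals_vanish_iff[OF \<open>a < b\<close>] by (auto simp: dint_def prod_eq_iff)
qed

lemma ddiv_eq_zero_iff: "fst y \<noteq> 0 \<Longrightarrow> ddiv x y = (0, 0) \<longleftrightarrow> x = (0, 0)"
  by (auto simp: ddiv_def prod_eq_iff field_simps)

lemma s_G2_eq_s_A_iff:
  "s_G2 T G t = s_A T (\<lambda>s. fst (G s)) t
     \<longleftrightarrow> dint 0 t (\<lambda>\<sigma>. snd (hnorm (hvderiv {0..T} G \<sigma>))) = (0, 0)"
  by (simp add: s_G2_def s_A_def hint_def hnorm_def hvderiv_def)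

lemma s_G2_eq_s_a0_imp:
  "s_G2 T G t = s_a0 T a t \<Longrightarrow> dint 0 t (\<lambda>\<sigma>. snd (hnorm (hvderiv {0..T} G \<sigma>))) = (0, 0)"
  by (simp add: s_G2_def s_a0_def hint_def)

theorem corollary2:
  fixes a0 a1 a2 a3 :: "real \<Rightarrow> real^3" and T :: real
  assumes T: "T > 0"
    and diff: "\<forall>f\<in>{a0, a1, a2, a3}. (\<forall>t\<in>{0..T}. f differentiable (at t within {0..T}))
                 \<and> continuous_on {0..T} (vd {0..T} f)"
    and sphere: "\<forall>t\<in>{0..T}. hcurve a0 a1 a2 a3 t \<in> hsphere"
    and a0': "\<forall>t\<in>{0..T}. vd {0..T} a0 t \<noteq> 0"
  shows "dual_ruled_developable {0..T}
            (\<lambda>t. dcross (a0 t, a1 t) (a2 t, a3 t)) (\<lambda>t. (a0 t, a1 t))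
         \<longleftrightarrow>
         ((\<forall>t\<in>{0..T}. s_G2 T (hcurve a0 a1 a2 a3) t = s_A T (\<lambda>t. (a0 t, a1 t)) t)
          \<or> ((\<forall>t\<in>{0..T}. s_G2 T (hcurve a0 a1 a2 a3) t = s_a0 T a0 t)
             \<and> real_ruled_developable {0..T} (\<lambda>t. cross3 (a0 t) (a1 t)) a0))"
proof -
  define G where "G = hcurve a0 a1 a2 a3"
  define h where "h = (\<lambda>\<sigma>. snd (hnorm (hvderiv {0..T} G \<sigma>)))"
  have h_eq: "h t = ddiv (dinner (vd {0..T} a0 t, vd {0..T} a1 t) (vd {0..T} a2 t, vd {0..T} a3 t))
                         (dnorm (vd {0..T} a0 t, vd {0..T} a1 t))" for t
    by (simp add: h_def G_def hnorm_def hvderiv_def dvderiv_def hcurve_def)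
  have "dual_ruled_developable {0..T} (\<lambda>t. dcross (a0 t, a1 t) (a2 t, a3 t)) (\<lambda>t. (a0 t, a1 t))
          \<longleftrightarrow> (\<forall>t\<in>{0..T}. h t = (0, 0))"
    using T diff sphere a0'
    by (simp add: dual_ruled_developable_cross_iff h_eq ddiv_eq_zero_iff dvderiv_def
        dnorm_def hsphere_def hcurve_def)
  also have "\<dots> \<longleftrightarrow> (\<forall>t\<in>{0..T}. dint 0 t h = (0, 0))"
  proof (rule dint_vanish_iff[OF T, symmetric])
    show "continuous_on {0..T} h"
      using diff a0' unfolding h_eq ddiv_def dinner_def dnorm_def
      by (auto intro!: continuous_intros)
  qed
  finally have "dual_ruled_developable {0..T}
      (\<lambda>t. dcross (a0 t, a1 t) (a2 t, a3 t)) (\<lambda>t. (a0 t, a1 t)) \<longleftrightarrow> (\<forall>t\<in>{0..T}. dint 0 t h = (0, 0))" .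
  moreover have "s_G2 T G t = s_A T (\<lambda>t. (a0 t, a1 t)) t \<longleftrightarrow> dint 0 t h = (0, 0)" for t
    using s_G2_eq_s_A_iff[of T G t] by (simp add: h_def G_def hcurve_def)
  moreover have "s_G2 T G t = s_a0 T a0 t \<Longrightarrow> dint 0 t h = (0, 0)" for t
    using s_G2_eq_s_a0_imp[of T G t a0] by (simp add: h_def)
  \<comment> \<open>Condition (ii) already kills the \<open>\<epsilon>*\<close>-part.\<close>
  ultimately show ?thesis
    unfolding G_def by blast
qed

end
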